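(* Let $S$ be a powerful set with ground set $E$. For every $e\in E$, both the contraction $S/e$ and the deletion $S\setminus e$ are powerful multisets.
   Context: A set $S\subseteq 2^E$ is powerful if for every $X\subseteq E$ the number of members of $S$ contained in $X$ is a power of 2; view it as a multiset with $\{0,1\}$-valued indicator function $f$. For a multiset over $E$ with indicator function $f$ (multiplicities), assuming $f(\emptyset)\ne0$, it is a powerful multiset if $\log_2\Big(\sum_{Y\subseteq E} f(Y)\big/\sum_{Y\subseteq E\setminus X} f(Y)\Big)$ is an integer for all $X\subseteq E$. For $e\in E$, the contraction $S/e$ is the multiset over $E\setminus\{e\}$ with indicator function $(f/e)(X)=f(X)$, and the deletion $S\setminus e$ is the multiset over $E\setminus\{e\}$ with indicator function $(f\setminus e)(X)=f(X)+f(X\cup\{e\})$, for $X\subseteq E\setminus\{e\}$. *)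

theory Defs
  imports Complex_Main
begin

definition powerful_set :: "'a set \<Rightarrow> 'a set set \<Rightarrow> bool" where
  "powerful_set E S \<longleftrightarrow> S \<subseteq> Pow E \<and>
     (\<forall>X. X \<subseteq> E \<longrightarrow> (\<exists>k::nat. card {Y \<in> S. Y \<subseteq> X} = 2 ^ k))"

definition set_indicator :: "'a set set \<Rightarrow> 'a set \<Rightarrow> nat" where
  "set_indicator S Y = (if Y \<in> S then 1 else 0)"

definition powerful_multiset :: "'a set \<Rightarrow> ('a set \<Rightarrow> nat) \<Rightarrow> bool" where
  "powerful_multiset E f \<longleftrightarrow> f {} \<noteq> 0 \<and>
     (\<forall>X. X \<subseteq> E \<longrightarrow>
        log 2 (real (\<Sum>Y\<in>Pow E. f Y) / real (\<Sum>Y\<in>Pow (E - X). f Y)) \<in> \<int>)"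

definition contraction :: "('a set \<Rightarrow> nat) \<Rightarrow> 'a \<Rightarrow> 'a set \<Rightarrow> nat" where
  "contraction f e X = f X"

definition deletion :: "('a set \<Rightarrow> nat) \<Rightarrow> 'a \<Rightarrow> 'a set \<Rightarrow> nat" where
  "deletion f e X = f X + f (insert e X)"

end

theory Submission
  imports Defs
begin

text \<open>Writing \<open>\<sigma>(A)\<close> for the total multiplicity of the subsets of \<open>A\<close>, a multiset \<open>f\<close> over \<open>E\<close> with
  \<open>f {} \<noteq> 0\<close> is powerful iff \<open>\<sigma>(E)/\<sigma>(A)\<close> is a power of 2 for every \<open>A \<subseteq> E\<close>. For a powerful set all the
  \<open>\<sigma>(A)\<close> are powers of 2. Contraction keeps \<open>\<sigma>\<close> on subsets of \<open>E - {e}\<close>, and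
  \<open>\<sigma>(E - {e})/\<sigma>(A)\<close> is the quotient of \<open>\<sigma>(E)/\<sigma>(A)\<close> by \<open>\<sigma>(E)/\<sigma>(E - {e})\<close>; deletion turns
  \<open>\<sigma>(A)\<close> into \<open>\<sigma>(A \<union> {e})\<close>, so its ratios are ratios of the original multiset.\<close>

lemma powerful_multiset_iff_subsets:
  "powerful_multiset E f \<longleftrightarrow> f {} \<noteq> 0 \<and>
     (\<forall>A \<subseteq> E. log 2 (real (\<Sum>Y\<in>Pow E. f Y) / real (\<Sum>Y\<in>Pow A. f Y)) \<in> \<int>)"
proof -
  have "(\<forall>X. X \<subseteq> E \<longrightarrow> P (E - X)) \<longleftrightarrow> (\<forall>A \<subseteq> E. P A)" for P :: "'a set \<Rightarrow> bool"
  proof (intro iffI allI impI)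
    fix A assume "\<forall>X. X \<subseteq> E \<longrightarrow> P (E - X)" and "A \<subseteq> E"
    then have "P (E - (E - A))"
      by blast
    with \<open>A \<subseteq> E\<close> show "P A"
      by (simp add: double_diff)
  qed auto
  then show ?thesis
    unfolding powerful_multiset_def by (rule arg_cong)
qed

lemma sum_Pow_pos:
  fixes f :: "'a set \<Rightarrow> nat"
  assumes "finite A" and "f {} \<noteq> 0"
  shows "(\<Sum>Y\<in>Pow A. f Y) > 0"
  using assms by (metis Pow_iff empty_subsetI finite_Pow_iff gr0I sum_eq_0_iff)

lemma log_divide_pow2_Ints: "log 2 (real ((2::nat) ^ a) / real ((2::nat) ^ b)) \<in> \<int>"
proof -
  have "real ((2::nat) ^ a) / real ((2::nat) ^ b) = 2 powr (real a - real b)"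
    by (simp add: powr_diff powr_realpow)
  then show ?thesis
    by simp
qed

lemma log_divide_Ints_cancel:
  fixes a b c :: real
  assumes "a > 0" "b > 0" "c > 0"
    and "log 2 (a / b) \<in> \<int>" "log 2 (a / c) \<in> \<int>"
  shows "log 2 (c / b) \<in> \<int>"
proof -
  have "log 2 (c / b) = log 2 (a / b) - log 2 (a / c)"
    using assms(1-3) by (simp add: log_divide)
  then show ?thesis
    using assms(4,5) by simp
qed

lemma sum_Pow_set_indicator:
  assumes "finite A"
  shows "(\<Sum>Y\<in>Pow A. set_indicator S Y) = card {Y \<in> S. Y \<subseteq> A}"
proof -
  have "(\<Sum>Y\<in>Pow A. set_indicator S Y) = (\<Sum>Y\<in>Pow A \<inter> S. 1)"
    unfolding set_indicator_def using assms by (simp add: sum.If_cases)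
  also have "Pow A \<inter> S = {Y \<in> S. Y \<subseteq> A}"
    by auto
  finally show ?thesis
    by simp
qed

lemma sum_Pow_deletion:
  assumes "finite A" "e \<notin> A"
  shows "(\<Sum>Y\<in>Pow A. deletion f e Y) = (\<Sum>Y\<in>Pow (insert e A). f Y)"
proof -
  have disjoint: "Pow A \<inter> insert e ` Pow A = {}"
    using assms(2) by auto
  have "inj_on (insert e) (Pow A)"
    using assms(2) unfolding inj_on_def by (metis Pow_iff insert_absorb insert_ident subset_iff)
  then have "(\<Sum>Y\<in>insert e ` Pow A. f Y) = (\<Sum>Y\<in>Pow A. f (insert e Y))"
    by (simp add: sum.reindex)
  moreover have "(\<Sum>Y\<in>Pow (insert e A). f Y) = (\<Sum>Y\<in>Pow A. f Y) + (\<Sum>Y\<in>insert e ` Pow A. f Y)"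
    unfolding Pow_insert using assms(1) disjoint by (simp add: sum.union_disjoint)
  ultimately show ?thesis
    unfolding deletion_def by (simp add: sum.distrib)
qed

lemma powerful_set_empty_mem:
  assumes "powerful_set E S"
  shows "{} \<in> S"
proof -
  obtain k :: nat where "card {Y \<in> S. Y \<subseteq> {}} = 2 ^ k"
    using assms unfolding powerful_set_def by blast
  then have "{Y \<in> S. Y \<subseteq> {}} \<noteq> {}"
    by (metis card.empty power_not_zero zero_neq_numeral)
  then show ?thesis
    by auto
qed

lemma powerful_set_imp_powerful_multiset:
  assumes "finite E" and "powerful_set E S"
  shows "powerful_multiset E (set_indicator S)"
  unfolding powerful_multiset_iff_subsets
proof (intro conjI allI impI)
  show "set_indicator S {} \<noteq> 0"
    using powerful_set_empty_mem[OF assms(2)] by (simp add: set_indicator_def)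
next
  fix A assume "A \<subseteq> E"
  have pow2: "\<exists>k::nat. (\<Sum>Y\<in>Pow B. set_indicator S Y) = 2 ^ k" if "B \<subseteq> E" for B
    using assms(2) that finite_subset[OF that assms(1)]
    unfolding powerful_set_def by (simp add: sum_Pow_set_indicator)
  obtain a b :: nat where "(\<Sum>Y\<in>Pow E. set_indicator S Y) = 2 ^ a"
    and "(\<Sum>Y\<in>Pow A. set_indicator S Y) = 2 ^ b"
    using pow2[OF order_refl] pow2[OF \<open>A \<subseteq> E\<close>] by blast
  then show "log 2 (real (\<Sum>Y\<in>Pow E. set_indicator S Y) / real (\<Sum>Y\<in>Pow A. set_indicator S Y)) \<in> \<int>"
    using log_divide_pow2_Ints[of a b] by simp
qed

lemma powerful_multiset_contraction:
  assumes "finite E" and "powerful_multiset E f"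
  shows "powerful_multiset (E - {e}) (contraction f e)"
proof -
  have "contraction f e = f"
    by (simp add: contraction_def fun_eq_iff)
  moreover have "powerful_multiset (E - {e}) f"
    unfolding powerful_multiset_iff_subsets
  proof (intro conjI allI impI)
    have ratio: "log 2 (real (\<Sum>Y\<in>Pow E. f Y) / real (\<Sum>Y\<in>Pow A. f Y)) \<in> \<int>"
      if "A \<subseteq> E" for A
      using assms(2) that unfolding powerful_multiset_iff_subsets by blast
    show "f {} \<noteq> 0"
      using assms(2) unfolding powerful_multiset_def by blast
    then have pos: "real (\<Sum>Y\<in>Pow A. f Y) > 0" if "A \<subseteq> E" for A
      using sum_Pow_pos[OF finite_subset[OF that assms(1)]] by (simp only: of_nat_0_less_iff)
    fix A assume "A \<subseteq> E - {e}"
    then show "log 2 (real (\<Sum>Y\<in>Pow (E - {e}). f Y) / real (\<Sum>Y\<in>Pow A. f Y)) \<in> \<int>"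
      by (intro log_divide_Ints_cancel[OF pos pos pos ratio ratio]) auto
  qed
  ultimately show ?thesis
    by simp
qed

lemma powerful_multiset_deletion:
  assumes "finite E" and "e \<in> E" and "powerful_multiset E f"
  shows "powerful_multiset (E - {e}) (deletion f e)"
  unfolding powerful_multiset_iff_subsets
proof (intro conjI allI impI)
  show "deletion f e {} \<noteq> 0"
    using assms(3) unfolding powerful_multiset_def deletion_def by simp
next
  fix A assume A: "A \<subseteq> E - {e}"
  have "insert e (E - {e}) = E"
    using assms(2) by blast
  then have "(\<Sum>Y\<in>Pow (E - {e}). deletion f e Y) = (\<Sum>Y\<in>Pow E. f Y)"
    using sum_Pow_deletion[of "E - {e}" e f] assms(1) by simp
  moreover have "(\<Sum>Y\<in>Pow A. deletion f e Y) = (\<Sum>Y\<in>Pow (insert e A). f Y)"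
    using A finite_subset[OF A] assms(1) by (intro sum_Pow_deletion) auto
  moreover have "insert e A \<subseteq> E"
    using A assms(2) by blast
  then have "log 2 (real (\<Sum>Y\<in>Pow E. f Y) / real (\<Sum>Y\<in>Pow (insert e A). f Y)) \<in> \<int>"
    using assms(3) unfolding powerful_multiset_iff_subsets by blast
  ultimately show "log 2 (real (\<Sum>Y\<in>Pow (E - {e}). deletion f e Y) /
      real (\<Sum>Y\<in>Pow A. deletion f e Y)) \<in> \<int>"
    by simp
qed

theorem corollary1:
  fixes E :: "'a set" and S :: "'a set set" and e :: 'a
  assumes "finite E"
    and "powerful_set E S"
    and "e \<in> E"
  shows "powerful_multiset (E - {e}) (contraction (set_indicator S) e)
       \<and> powerful_multiset (E - {e}) (deletion (set_indicator S) e)"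
proof -
  have "powerful_multiset E (set_indicator S)"
    using assms(1,2) by (rule powerful_set_imp_powerful_multiset)
  then show ?thesis
    using powerful_multiset_contraction[OF assms(1)] powerful_multiset_deletion[OF assms(1,3)]
    by simp
qed

end
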